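(* Let $\alpha\in\mathbb C$, $m\in\mathbb N$. The map $\Upsilon_{(\alpha,m)}:\widehat R\to\mathbb C[[\rho]][\sigma]/(\sigma^m)$, $h\mapsto\gamma\big(\widehat T_{(\alpha,2m)}(h)\big)$, is a group homomorphism from $(\widehat R,+)$ to $(\mathbb C[[\rho]][\sigma]/(\sigma^m),\circ)$.
   Context: $\widehat R=\mathbb C[[z_1,z_2]]=\mathbb C[[\rho\cos\varphi,\rho\sin\varphi]]$; for $f\in\widehat R$ and $i\in\mathbb N_0$, $f^{(i)}_\alpha=\partial^if/\partial\varphi^i|_{\varphi=\alpha}\in\mathbb C[[\rho]]$, and $T_{(\alpha,k)}(f)=\sum_{i=0}^{k-1}f^{(i)}_\alpha\varepsilon^i/i!\in\mathbb C[[\rho]][\varepsilon]/(\varepsilon^k)$. For $h\in\widehat R$, $\widehat T_{(\alpha,k)}(h)\in\mathbb C[[\rho]][\varepsilon]/(\varepsilon^{k})$ is defined by $T_{(\alpha,k)}(\exp(h))=\widehat T_{(\alpha,k)}(h)\cdot\exp(h^{(0)}_\alpha)$. For a ring $\Bbbk$, $K=\Bbbk[\varepsilon^2]/(\varepsilon^{2m})\subset L=\Bbbk[\varepsilon]/(\varepsilon^{2m})$ and a unit $g\in L$, $\gamma(g)$ denotes the unique element of $K$ with $g\cdot(1+\varepsilon\gamma(g))\in K$; here $\Bbbk=\mathbb C[[\rho]]$ and $K$ is identified with $\mathbb C[[\rho]][\sigma]/(\sigma^m)$ via $\sigma=\varepsilon^2$. The operation is $\gamma_1\circ\gamma_2=(\gamma_1+\gamma_2)(1+\sigma\gamma_1\gamma_2)^{-1}$.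 *)

theory Defs
  imports "HOL-Computational_Algebra.Formal_Power_Series"
          "HOL-Computational_Algebra.Polynomial"
          "HOL-Algebra.Group"
          "HOL-Analysis.Derivative"
begin

text \<open>R-hat = C[[z1,z2]] is modelled as complex fps fps, with  fps_nth (fps_nth f a) b  the coefficient
  of z1^a z2^b.  C[[rho]] is complex fps.  The truncated ring k[eps]/(eps^k) is modelled
  by polynomials over k of degree < k (canonical representatives), with truncated
  multiplication.\<close>

definition ptrunc :: "nat \<Rightarrow> 'a::comm_ring_1 poly \<Rightarrow> 'a poly" where
  "ptrunc k p = (\<Sum>i<k. monom (coeff p i) i)"

definition tmult :: "nat \<Rightarrow> 'a::comm_ring_1 poly \<Rightarrow> 'a poly \<Rightarrow> 'a poly" where
  "tmult k p q = ptrunc k (p * q)"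

definition tone :: "nat \<Rightarrow> 'a::comm_ring_1 poly" where
  "tone k = ptrunc k 1"

definition tinv :: "nat \<Rightarrow> 'a::comm_ring_1 poly \<Rightarrow> 'a poly" where
  "tinv k p = (THE u. ptrunc k u = u \<and> tmult k p u = tone k)"

text \<open>f^{(i)}_alpha: substitute z1 = rho cos phi, z2 = rho sin phi, differentiate i times
  in phi and evaluate at phi = alpha; coefficient of rho^n.\<close>
definition phi_deriv :: "complex fps fps \<Rightarrow> complex \<Rightarrow> nat \<Rightarrow> complex fps" where
  "phi_deriv f \<alpha> i = Abs_fps (\<lambda>n. \<Sum>a\<le>n. fps_nth (fps_nth f a) (n - a) *
       (deriv ^^ i) (\<lambda>t. cos t ^ a * sin t ^ (n - a)) \<alpha>)"

definition taylor_T :: "complex \<Rightarrow> nat \<Rightarrow> complex fps fps \<Rightarrow> complex fps poly" where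
  "taylor_T \<alpha> k f = (\<Sum>i<k. monom (fps_const (1 / fact i) * phi_deriv f \<alpha> i) i)"

definition fps_Exp :: "complex fps \<Rightarrow> complex fps" where
  "fps_Exp g = fps_const (exp (fps_nth g 0)) * (fps_exp 1 oo (g - fps_const (fps_nth g 0)))"

text \<open>exp on C[[z1,z2]]: exp(h) = e^{c} * sum_n (h - c)^n / n!, c the constant term;
  the coefficient of z1^i z2^j only receives contributions from n <= i + j.\<close>
definition bexp :: "complex fps fps \<Rightarrow> complex fps fps" where
  "bexp h = (let c = fps_nth (fps_nth h 0) 0 in
     Abs_fps (\<lambda>i. Abs_fps (\<lambda>j. exp c *
        (\<Sum>n\<le>i + j. fps_nth (fps_nth ((h - fps_const (fps_const c)) ^ n) i) j / fact n))))"

definition taylor_That :: "complex \<Rightarrow> nat \<Rightarrow> complex fps fps \<Rightarrow> complex fps poly" where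
  "taylor_That \<alpha> k h = (THE x. ptrunc k x = x \<and>
      taylor_T \<alpha> k (bexp h) = tmult k x [: fps_Exp (phi_deriv h \<alpha> 0) :])"

text \<open>K = k[eps^2]/(eps^{2m}) inside L = k[eps]/(eps^{2m}).\<close>
definition evenK :: "nat \<Rightarrow> 'a::comm_ring_1 poly set" where
  "evenK m = {p. ptrunc (2 * m) p = p \<and> (\<forall>i. odd i \<longrightarrow> coeff p i = 0)}"

definition gammaK :: "nat \<Rightarrow> 'a::comm_ring_1 poly \<Rightarrow> 'a poly" where
  "gammaK m g = (THE c. c \<in> evenK m \<and> tmult (2 * m) g (1 + [:0, 1:] * c) \<in> evenK m)"

text \<open>Identification of K with k[sigma]/(sigma^m) via sigma = eps^2.\<close>
definition to_sigma :: "'a::comm_ring_1 poly \<Rightarrow> 'a poly" where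
  "to_sigma p = (\<Sum>i\<le>degree p. monom (coeff p (2 * i)) i)"

definition circ :: "nat \<Rightarrow> 'a::comm_ring_1 poly \<Rightarrow> 'a poly \<Rightarrow> 'a poly" where
  "circ m g1 g2 = tmult m (g1 + g2)
      (tinv m (tone m + tmult m [:0, 1:] (tmult m g1 g2)))"

definition Upsilon :: "complex \<Rightarrow> nat \<Rightarrow> complex fps fps \<Rightarrow> complex fps poly" where
  "Upsilon \<alpha> m h = to_sigma (gammaK m (taylor_That \<alpha> (2 * m) h))"

definition Rhat_add_group :: "complex fps fps monoid" where
  "Rhat_add_group = \<lparr>carrier = UNIV, mult = (+), one = 0\<rparr>"

definition circ_group :: "nat \<Rightarrow> complex fps poly monoid" where
  "circ_group m = \<lparr>carrier = {p. ptrunc m p = p}, mult = circ m, one = 0\<rparr>"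

end

theory Submission
  imports Defs "HOL-Complex_Analysis.Cauchy_Integral_Formula"
begin

text \<open>The map \<open>h \<mapsto> T\<^sup>^(h)\<close> turns sums into products in \<open>L\<close>: \<open>exp\<close> does so, \<open>T\<close> is
  multiplicative modulo \<open>\<epsilon>\<^sup>2\<^sup>m\<close> by the Leibniz rule for the \<open>\<phi>\<close>-derivatives, and the
  normalising factor \<open>exp(h\<^sup>(\<^sup>0\<^sup>)\<^sub>\<alpha>)\<close> is multiplicative as well. It remains to see that
  \<open>\<gamma>\<close> turns products of units of \<open>L\<close> into \<open>\<circ>\<close>. Writing \<open>g = A(\<epsilon>\<^sup>2) + \<epsilon> B(\<epsilon>\<^sup>2)\<close>,
  \<open>\<gamma>(g) = C(\<epsilon>\<^sup>2)\<close> where \<open>C\<close> is the unique solution of \<open>A C + B = 0\<close> in \<open>k[\<sigma>]/(\<sigma>\<^sup>m)\<close>,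
  and a polynomial identity shows that \<open>C\<^sub>1 \<circ> C\<^sub>2\<close> solves the equation of \<open>g\<^sub>1 g\<^sub>2\<close>.\<close>

section \<open>Arithmetic modulo \<open>X ^ k\<close>\<close>

definition zero_below :: "nat \<Rightarrow> 'a::comm_ring_1 poly \<Rightarrow> bool" where
  "zero_below k p \<longleftrightarrow> (\<forall>i<k. coeff p i = 0)"

definition eq_below :: "nat \<Rightarrow> 'a::comm_ring_1 poly \<Rightarrow> 'a poly \<Rightarrow> bool" where
  "eq_below k p q \<longleftrightarrow> (\<forall>i<k. coeff p i = coeff q i)"

lemma eq_below_iff_zero_below: "eq_below k p q \<longleftrightarrow> zero_below k (p - q)"
  by (simp add: eq_below_def zero_below_def)

lemma coeff_ptrunc: "coeff (ptrunc k p) i = (if i < k then coeff p i else 0)"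
  unfolding ptrunc_def by (simp add: coeff_sum)

lemma ptrunc_eq_iff: "ptrunc k p = ptrunc k q \<longleftrightarrow> eq_below k p q"
  unfolding eq_below_def poly_eq_iff coeff_ptrunc by auto

lemma ptrunc_idem [simp]: "ptrunc k (ptrunc k p) = ptrunc k p"
  by (simp add: poly_eq_iff coeff_ptrunc)

lemma ptrunc_eq_self_iff: "ptrunc k p = p \<longleftrightarrow> (\<forall>i\<ge>k. coeff p i = 0)"
  unfolding poly_eq_iff coeff_ptrunc by (metis not_le)

lemma eq_below_ptrunc: "eq_below k (ptrunc k p) p"
  by (simp add: eq_below_def coeff_ptrunc)

lemma zero_below_add: "zero_below k p \<Longrightarrow> zero_below k q \<Longrightarrow> zero_below k (p + q)"
  by (simp add: zero_below_def)

lemma zero_below_diff: "zero_below k p \<Longrightarrow> zero_below k q \<Longrightarrow> zero_below k (p - q)"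
  by (simp add: zero_below_def)

lemma zero_below_mult_left: "zero_below k p \<Longrightarrow> zero_below k (q * p)"
  by (simp add: zero_below_def coeff_mult)

lemma zero_below_mult_right: "zero_below k p \<Longrightarrow> zero_below k (p * q)"
  by (simp add: zero_below_def coeff_mult)

lemma eq_below_refl [simp]: "eq_below k p p"
  by (simp add: eq_below_def)

lemma eq_below_sym: "eq_below k p q \<Longrightarrow> eq_below k q p"
  by (simp add: eq_below_def)

lemma eq_below_trans [trans]: "eq_below k p q \<Longrightarrow> eq_below k q r \<Longrightarrow> eq_below k p r"
  by (simp add: eq_below_def)

lemma eq_below_add: "eq_below k p p' \<Longrightarrow> eq_below k q q' \<Longrightarrow> eq_below k (p + q) (p' + q')"
  by (simp add: eq_below_def)

lemma eq_below_mult: "eq_below k p p' \<Longrightarrow> eq_below k q q' \<Longrightarrow> eq_below k (p * q) (p' * q')"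
proof -
  assume "eq_below k p p'" "eq_below k q q'"
  then have "zero_below k ((p - p') * q + p' * (q - q'))"
    by (intro zero_below_add zero_below_mult_left zero_below_mult_right)
      (simp_all add: eq_below_iff_zero_below)
  moreover have "(p - p') * q + p' * (q - q') = p * q - p' * q'"
    by (simp add: algebra_simps)
  ultimately show ?thesis by (simp add: eq_below_iff_zero_below)
qed

lemma ptrunc_mult_left: "ptrunc k (ptrunc k p * q) = ptrunc k (p * q)"
  unfolding ptrunc_eq_iff by (intro eq_below_mult eq_below_ptrunc eq_below_refl)

lemma ptrunc_mult_right: "ptrunc k (p * ptrunc k q) = ptrunc k (p * q)"
  unfolding ptrunc_eq_iff by (intro eq_below_mult eq_below_ptrunc eq_below_refl)

lemma zero_below_power: "coeff p 0 = 0 \<Longrightarrow> zero_below k (p ^ k)"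
proof -
  assume "coeff p 0 = 0"
  then obtain q where "p = pCons 0 q" by (metis pCons_cases coeff_pCons_0)
  then have "p = monom 1 1 * q" by (simp add: monom_Suc)
  then have "p ^ k = monom 1 k * q ^ k" by (simp add: power_mult_distrib monom_power)
  then show ?thesis by (simp add: zero_below_def coeff_monom_mult)
qed

text \<open>With \<open>b\<close> an inverse of the constant term, the geometric series of \<open>1 - b p\<close>
  terminates modulo \<open>X ^ k\<close>.\<close>

lemma eq_below_inverse_exists:
  fixes p :: "'a::comm_ring_1 poly"
  assumes "coeff p 0 dvd 1"
  shows "\<exists>v. eq_below k (p * v) 1"
proof -
  obtain b where b: "1 = coeff p 0 * b" using assms by (rule dvdE)
  define q where "q = 1 - [:b:] * p"
  have q0: "coeff q 0 = 0" using b by (simp add: q_def mult.commute)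
  have "p * ([:b:] * (\<Sum>i<k. q ^ i)) = (1 - q) * (\<Sum>i<k. q ^ i)"
    by (simp add: q_def algebra_simps)
  also have "\<dots> = 1 - q ^ k" by (simp add: one_diff_power_eq)
  finally have "eq_below k (p * ([:b:] * (\<Sum>i<k. q ^ i))) 1"
    using zero_below_power[OF q0, of k] by (simp add: eq_below_iff_zero_below zero_below_def)
  then show ?thesis by blast
qed

lemma eq_below_tinv:
  assumes "eq_below k (p * v) 1"
  shows "eq_below k (p * tinv k p) 1"
proof -
  have "ptrunc k (ptrunc k v) = ptrunc k v \<and> tmult k p (ptrunc k v) = tone k"
    using assms by (simp add: tmult_def tone_def ptrunc_mult_right ptrunc_eq_iff)
  moreover have "u = ptrunc k v" if u: "ptrunc k u = u \<and> tmult k p u = tone k" for u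
  proof -
    have "eq_below k (p * u) 1" using u by (simp add: tmult_def tone_def ptrunc_eq_iff)
    then have "eq_below k (v * (p * u)) v" and "eq_below k (u * (p * v)) u"
      using eq_below_mult[OF eq_below_refl] assms by (metis mult_1_right)+
    then have "eq_below k u v" by (auto simp: eq_below_def algebra_simps)
    then show ?thesis using u by (metis ptrunc_eq_iff)
  qed
  ultimately have "tinv k p = ptrunc k v"
    unfolding tinv_def by (intro the_equality) blast+
  then show ?thesis
    using assms by (metis eq_below_mult eq_below_ptrunc eq_below_refl eq_below_trans)
qed

lemma zero_below_cancel:
  assumes "coeff p 0 dvd 1" "zero_below k (p * q)"
  shows "zero_below k q"
proof -
  obtain v where v: "eq_below k (p * v) 1" using eq_below_inverse_exists[OF assms(1)] by blast
  have "eq_below k (p * v * q) q" and "eq_below k (v * (p * q)) 0"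
    using eq_below_mult[OF v eq_below_refl, of q] eq_below_mult[OF eq_below_refl, of k "p * q" 0 v]
      assms(2) by (simp_all add: eq_below_iff_zero_below)
  then have "eq_below k q 0" by (auto simp: eq_below_def algebra_simps)
  then show ?thesis by (simp add: eq_below_iff_zero_below)
qed

section \<open>Even and odd parts, and the map \<open>\<gamma>\<close>\<close>

definition from_sigma :: "'a::comm_ring_1 poly \<Rightarrow> 'a poly" where
  "from_sigma q = pcompose q [:0, 0, 1:]"

definition odd_part :: "'a::comm_ring_1 poly \<Rightarrow> 'a poly" where
  "odd_part p = (\<Sum>i\<le>degree p. monom (coeff p (2 * i + 1)) i)"

lemma coeff_from_sigma: "coeff (from_sigma q) j = (if even j then coeff q (j div 2) else 0)"
  unfolding from_sigma_def
proof (induction q arbitrary: j rule: pCons_induct)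
  case (pCons a p)
  consider "j = 0" | "j = 1" | j' where "j = Suc (Suc j')"
    by (metis One_nat_def not0_implies_Suc)
  then show ?case
    by cases (simp_all add: pcompose_pCons pCons.IH)
qed simp

lemma coeff_to_sigma: "coeff (to_sigma p) i = coeff p (2 * i)"
  unfolding to_sigma_def coeff_sum by (auto simp: coeff_eq_0)

lemma coeff_odd_part: "coeff (odd_part p) i = coeff p (2 * i + 1)"
  unfolding odd_part_def coeff_sum by (auto simp: coeff_eq_0)

lemma from_sigma_add: "from_sigma (p + q) = from_sigma p + from_sigma q"
  by (simp add: from_sigma_def pcompose_add)

lemma from_sigma_mult: "from_sigma (p * q) = from_sigma p * from_sigma q"
  by (simp add: from_sigma_def pcompose_mult)

lemma from_sigma_1: "from_sigma 1 = 1"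
  by (simp add: from_sigma_def pcompose_1)

lemma from_sigma_X: "from_sigma [:0, 1:] = [:0, 1:] * [:0, 1:]"
  by (simp add: from_sigma_def pcompose_pCons)

lemma even_odd_decomp: "p = from_sigma (to_sigma p) + [:0, 1:] * from_sigma (odd_part p)"
proof (rule poly_eqI)
  fix j show "coeff p j = coeff (from_sigma (to_sigma p) + [:0, 1:] * from_sigma (odd_part p)) j"
    by (cases j) (auto simp: coeff_from_sigma coeff_to_sigma coeff_odd_part elim!: evenE oddE)
qed

lemma to_sigma_even_odd: "to_sigma (from_sigma P + [:0, 1:] * from_sigma Q) = P"
proof -
  have "coeff ([:0, 1:] * from_sigma Q) (2 * n) = 0" for n
    by (cases n) (simp_all add: coeff_from_sigma)
  then show ?thesis by (simp add: poly_eq_iff coeff_to_sigma coeff_from_sigma)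
qed

lemma odd_part_even_odd: "odd_part (from_sigma P + [:0, 1:] * from_sigma Q) = Q"
  by (simp add: poly_eq_iff coeff_odd_part coeff_from_sigma)

lemma to_sigma_from_sigma [simp]: "to_sigma (from_sigma P) = P"
  using to_sigma_even_odd[of P 0] by (simp add: from_sigma_def)

lemma to_sigma_odd_part_mult:
  "to_sigma (p * q) = to_sigma p * to_sigma q + [:0, 1:] * odd_part p * odd_part q"
  "odd_part (p * q) = to_sigma p * odd_part q + odd_part p * to_sigma q"
proof -
  define X :: "'a poly" where "X = [:0, 1:]"
  have "p * q = (from_sigma (to_sigma p) + X * from_sigma (odd_part p)) *
      (from_sigma (to_sigma q) + X * from_sigma (odd_part q))"
    using even_odd_decomp[of p] even_odd_decomp[of q] by (simp add: X_def)
  also have "\<dots> = from_sigma (to_sigma p * to_sigma q + X * odd_part p * odd_part q) +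
      X * from_sigma (to_sigma p * odd_part q + odd_part p * to_sigma q)"
    by (simp only: from_sigma_add from_sigma_mult from_sigma_X X_def) (simp add: algebra_simps)
  finally have pq: "p * q = \<dots>" .
  show "to_sigma (p * q) = to_sigma p * to_sigma q + [:0, 1:] * odd_part p * odd_part q"
    "odd_part (p * q) = to_sigma p * odd_part q + odd_part p * to_sigma q"
    unfolding pq X_def to_sigma_even_odd odd_part_even_odd by simp_all
qed

lemma odd_part_mult_one_plus_X:
  "odd_part (g * (1 + [:0, 1:] * from_sigma C)) = to_sigma g * C + odd_part g"
proof -
  have "1 + [:0, 1:] * from_sigma C = from_sigma 1 + [:0, 1:] * from_sigma C"
    by (simp add: from_sigma_1)
  then show ?thesis
    unfolding to_sigma_odd_part_mult by (simp only: to_sigma_even_odd odd_part_even_odd) simp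
qed

lemma ptrunc_from_sigma: "ptrunc (2 * m) (from_sigma C) = from_sigma (ptrunc m C)"
  by (auto simp: poly_eq_iff coeff_ptrunc coeff_from_sigma)

lemma evenK_iff: "c \<in> evenK m \<longleftrightarrow> (\<exists>C. ptrunc m C = C \<and> c = from_sigma C)"
proof
  assume c: "c \<in> evenK m"
  then have "odd_part c = 0" by (simp add: poly_eq_iff coeff_odd_part evenK_def)
  then have "c = from_sigma (to_sigma c)"
    using even_odd_decomp[of c] by (simp add: from_sigma_def)
  moreover have "ptrunc m (to_sigma c) = to_sigma c"
    using c unfolding evenK_def ptrunc_eq_self_iff coeff_to_sigma by auto
  ultimately show "\<exists>C. ptrunc m C = C \<and> c = from_sigma C" by blast
next
  assume "\<exists>C. ptrunc m C = C \<and> c = from_sigma C"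
  then show "c \<in> evenK m"
    by (auto simp: evenK_def ptrunc_from_sigma coeff_from_sigma)
qed

lemma ptrunc_in_evenK_iff: "ptrunc (2 * m) p \<in> evenK m \<longleftrightarrow> zero_below m (odd_part p)"
proof -
  have "(\<forall>i. odd i \<longrightarrow> coeff (ptrunc (2 * m) p) i = 0) \<longleftrightarrow> (\<forall>j<m. coeff p (2 * j + 1) = 0)"
    by (auto simp: coeff_ptrunc elim!: oddE)
  then show ?thesis by (simp add: evenK_def zero_below_def coeff_odd_part)
qed

lemma gammaK_eqI:
  assumes unit: "coeff g 0 dvd 1" and C: "ptrunc m C = C"
    and sol: "zero_below m (to_sigma g * C + odd_part g)"
  shows "gammaK m g = from_sigma C"
  unfolding gammaK_def tmult_def
proof (rule the_equality)
  have "from_sigma C \<in> evenK m" using C unfolding evenK_iff by blast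
  moreover have "ptrunc (2 * m) (g * (1 + [:0, 1:] * from_sigma C)) \<in> evenK m"
    unfolding ptrunc_in_evenK_iff odd_part_mult_one_plus_X by (fact sol)
  ultimately show "from_sigma C \<in> evenK m \<and>
      ptrunc (2 * m) (g * (1 + [:0, 1:] * from_sigma C)) \<in> evenK m" ..
next
  fix c assume c: "c \<in> evenK m \<and> ptrunc (2 * m) (g * (1 + [:0, 1:] * c)) \<in> evenK m"
  then obtain C' where C': "ptrunc m C' = C'" "c = from_sigma C'" unfolding evenK_iff by blast
  have sol': "zero_below m (to_sigma g * C' + odd_part g)"
    using c unfolding C'(2) ptrunc_in_evenK_iff odd_part_mult_one_plus_X by blast
  have "to_sigma g * (C' - C) = (to_sigma g * C' + odd_part g) - (to_sigma g * C + odd_part g)"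
    by (simp add: algebra_simps)
  then have "zero_below m (to_sigma g * (C' - C))" using sol sol' by (metis zero_below_diff)
  moreover have "coeff (to_sigma g) 0 dvd 1" using unit by (simp add: coeff_to_sigma)
  ultimately have "zero_below m (C' - C)" by (rule zero_below_cancel[rotated])
  then have "ptrunc m C' = ptrunc m C" by (simp add: ptrunc_eq_iff eq_below_iff_zero_below)
  then have "C' = C" using C C' by simp
  then show "c = from_sigma C" using C' by simp
qed

lemma gammaK_solution_exists:
  assumes "coeff g 0 dvd 1"
  obtains C where "ptrunc m C = C" "zero_below m (to_sigma g * C + odd_part g)"
proof -
  have "coeff (to_sigma g) 0 dvd 1" using assms by (simp add: coeff_to_sigma)
  then obtain v where v: "eq_below m (to_sigma g * v) 1" using eq_below_inverse_exists by blast
  define C where "C = ptrunc m (- (odd_part g * v))"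
  have "eq_below m (to_sigma g * C) (to_sigma g * (- (odd_part g * v)))"
    unfolding C_def by (intro eq_below_mult eq_below_refl eq_below_ptrunc)
  moreover have "eq_below m (to_sigma g * v * - odd_part g) (1 * - odd_part g)"
    using v by (rule eq_below_mult) simp
  ultimately have "eq_below m (to_sigma g * C + odd_part g) 0"
    by (auto simp: eq_below_def algebra_simps)
  then show ?thesis using that[of C] by (simp add: C_def eq_below_iff_zero_below)
qed

lemma ptrunc_to_sigma_gammaK:
  assumes "coeff g 0 dvd 1"
  shows "ptrunc m (to_sigma (gammaK m g)) = to_sigma (gammaK m g)"
proof -
  obtain C where "ptrunc m C = C" "zero_below m (to_sigma g * C + odd_part g)"
    using gammaK_solution_exists[OF assms] .
  then show ?thesis using gammaK_eqI[OF assms] by simp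
qed

lemma gammaK_0: "gammaK 0 g = 0"
proof -
  have "evenK 0 = {0 :: 'a poly}"
    by (auto simp: evenK_def ptrunc_def)
  then show ?thesis by (simp add: gammaK_def tmult_def ptrunc_def)
qed

lemma gammaK_ptrunc: "gammaK m (ptrunc (2 * m) g) = gammaK m g"
  unfolding gammaK_def tmult_def ptrunc_mult_left ..

lemma circ_eq_below:
  "eq_below m ((1 + [:0, 1:] * C1 * C2) * circ m C1 C2) (C1 + C2)"
proof -
  define P where "P = 1 + [:0, 1:] * C1 * C2"
  define D where "D = tone m + tmult m [:0, 1:] (tmult m C1 C2)"
  have "tmult m [:0, 1:] (tmult m C1 C2) = ptrunc m ([:0, 1:] * C1 * C2)"
    by (simp only: tmult_def ptrunc_mult_right mult.assoc)
  then have D: "eq_below m D P"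
    unfolding D_def P_def tone_def by (simp only: eq_below_add eq_below_ptrunc)
  obtain v where "eq_below m (P * v) 1"
    using eq_below_inverse_exists[of P] by (auto simp: P_def)
  then have "eq_below m (D * v) 1" using eq_below_mult[OF D eq_below_refl] eq_below_trans by blast
  then have Du: "eq_below m (D * tinv m D) 1" by (rule eq_below_tinv)
  have "circ m C1 C2 = ptrunc m ((C1 + C2) * tinv m D)"
    by (simp add: circ_def tmult_def D_def)
  then have "eq_below m (P * circ m C1 C2) (D * ((C1 + C2) * tinv m D))"
    using eq_below_mult[OF eq_below_sym[OF D] eq_below_ptrunc] by simp
  also have "D * ((C1 + C2) * tinv m D) = D * tinv m D * (C1 + C2)"
    by (simp add: mult_ac)
  also have "eq_below m (D * tinv m D * (C1 + C2)) (1 * (C1 + C2))"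
    using Du by (rule eq_below_mult) simp
  finally show ?thesis by (simp add: P_def)
qed

text \<open>The identity below writes \<open>(1 + \<sigma> C\<^sub>1 C\<^sub>2)(A S + B)\<close> as a combination of the defects
  \<open>A\<^sub>i C\<^sub>i + B\<^sub>i\<close> and of \<open>(1 + \<sigma> C\<^sub>1 C\<^sub>2) S - (C\<^sub>1 + C\<^sub>2)\<close>.\<close>

lemma circ_solves:
  fixes A1 A2 B1 B2 C1 C2 :: "'a::comm_ring_1 poly"
  assumes E1: "zero_below m (A1 * C1 + B1)" and E2: "zero_below m (A2 * C2 + B2)"
  shows "zero_below m ((A1 * A2 + [:0, 1:] * B1 * B2) * circ m C1 C2 + (A1 * B2 + B1 * A2))"
proof -
  define X S P where "X = ([:0, 1:] :: 'a poly)" and "S = circ m C1 C2" and "P = 1 + X * C1 * C2"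
  define A B where "A = A1 * A2 + X * B1 * B2" and "B = A1 * B2 + B1 * A2"
  have identity: "P * (A * S + B) = (P * S - (C1 + C2)) * A
      + (A1 * C1 + B1) * (X * (C1 + C2) * (A2 * C2 + B2) + A2 * (1 - X * C2 * C2))
      + (A2 * C2 + B2) * (A1 * (1 - X * C1 * C1))"
    unfolding P_def A_def B_def by (simp add: algebra_simps)
  have "zero_below m (P * S - (C1 + C2))"
    using circ_eq_below[of m C1 C2] by (simp add: P_def S_def X_def eq_below_iff_zero_below)
  then have "zero_below m (P * (A * S + B))"
    unfolding identity
    by (intro zero_below_add[OF zero_below_add] zero_below_mult_right E1 E2)
  moreover have "coeff P 0 dvd 1" by (simp add: P_def X_def)
  ultimately show ?thesis
    using zero_below_cancel by (simp add: A_def B_def S_def X_def)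
qed

lemma to_sigma_gammaK_tmult:
  assumes u1: "coeff g1 0 dvd 1" and u2: "coeff g2 0 dvd 1"
  shows "to_sigma (gammaK m (tmult (2 * m) g1 g2)) =
    circ m (to_sigma (gammaK m g1)) (to_sigma (gammaK m g2))"
proof -
  obtain C1 where C1: "ptrunc m C1 = C1" "zero_below m (to_sigma g1 * C1 + odd_part g1)"
    using gammaK_solution_exists[OF u1] .
  obtain C2 where C2: "ptrunc m C2 = C2" "zero_below m (to_sigma g2 * C2 + odd_part g2)"
    using gammaK_solution_exists[OF u2] .
  have unit: "coeff (g1 * g2) 0 dvd 1" using mult_dvd_mono[OF u1 u2] by (simp add: coeff_mult)
  have "ptrunc m (circ m C1 C2) = circ m C1 C2" by (simp add: circ_def tmult_def)
  moreover have "zero_below m (to_sigma (g1 * g2) * circ m C1 C2 + odd_part (g1 * g2))"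
    using circ_solves[OF C1(2) C2(2)] by (simp add: to_sigma_odd_part_mult)
  ultimately have "gammaK m (g1 * g2) = from_sigma (circ m C1 C2)" by (rule gammaK_eqI[OF unit])
  then show ?thesis
    using gammaK_eqI[OF u1 C1] gammaK_eqI[OF u2 C2] by (simp add: tmult_def gammaK_ptrunc)
qed

section \<open>The exponential of a power series in \<open>\<rho>\<close>\<close>

lemma fps_exp_compose_add:
  fixes a b :: "'a::field_char_0 fps"
  assumes a: "fps_nth a 0 = 0" and b: "fps_nth b 0 = 0"
  shows "fps_exp 1 oo (a + b) = (fps_exp 1 oo a) * (fps_exp 1 oo b)"
proof -
  have const: "G = 1" if "fps_deriv G = 0" "fps_nth G 0 = 1" for G :: "'a fps"
    using that fps_deriv_eq_0_iff[of G] by simp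
  have deriv: "fps_deriv (fps_exp 1 oo c) = (fps_exp 1 oo c) * fps_deriv c"
    if "fps_nth c 0 = 0" for c :: "'a fps"
    using that by (subst fps_compose_deriv) simp_all
  have inv: "(fps_exp 1 oo c) * (fps_exp 1 oo - c) = 1"
    if "fps_nth c 0 = 0" for c :: "'a fps"
    using that by (intro const) (simp_all add: fps_deriv_mult deriv algebra_simps)
  have "(fps_exp 1 oo (a + b)) * (fps_exp 1 oo - a) * (fps_exp 1 oo - b) = 1"
    using a b by (intro const) (simp_all add: fps_deriv_mult deriv algebra_simps)
  then have "(fps_exp 1 oo (a + b)) * ((fps_exp 1 oo a) * (fps_exp 1 oo - a)) *
      ((fps_exp 1 oo b) * (fps_exp 1 oo - b)) = (fps_exp 1 oo a) * (fps_exp 1 oo b)"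
    by (simp add: algebra_simps)
  then show ?thesis using inv a b by simp
qed

lemma fps_Exp_add: "fps_Exp (f + g) = fps_Exp f * fps_Exp g"
proof -
  have "f + g - fps_const (fps_nth (f + g) 0) =
      (f - fps_const (fps_nth f 0)) + (g - fps_const (fps_nth g 0))"
    by (simp add: algebra_simps fps_const_add)
  then have "fps_exp 1 oo (f + g - fps_const (fps_nth (f + g) 0)) =
      (fps_exp 1 oo (f - fps_const (fps_nth f 0))) * (fps_exp 1 oo (g - fps_const (fps_nth g 0)))"
    by (simp only:) (rule fps_exp_compose_add; simp)
  then show ?thesis
    unfolding fps_Exp_def by (simp add: exp_add algebra_simps flip: fps_const_mult)
qed

lemma fps_Exp_nth_0: "fps_nth (fps_Exp f) 0 = exp (fps_nth f 0)"
  by (simp add: fps_Exp_def)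

section \<open>The Leibniz rule for \<open>\<phi>\<close>-derivatives\<close>

lemma sum_triangle_reindex:
  fixes F :: "nat \<Rightarrow> nat \<Rightarrow> 'a::comm_monoid_add"
  shows "(\<Sum>k\<le>n. \<Sum>i\<le>k. F i (k - i)) = (\<Sum>i\<le>n. \<Sum>j\<le>n - i. F i j)"
proof -
  have "(\<Sum>k\<le>n. \<Sum>i\<le>k. F i (k - i)) = (\<Sum>(i, j)\<in>{(i, j). i + j \<le> n}. F i j)"
    by (rule sum.triangle_reindex_eq[symmetric])
  also have "{(i, j). i + j \<le> n} = Sigma {..n} (\<lambda>i. {..n - i})" by auto
  finally show ?thesis by (simp add: sum.Sigma)
qed

lemma sum_triangle_swap:
  fixes F :: "nat \<Rightarrow> nat \<Rightarrow> 'a::comm_monoid_add"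
  shows "(\<Sum>i\<le>n. \<Sum>j\<le>n - i. F i j) = (\<Sum>j\<le>n. \<Sum>i\<le>n - j. F i j)"
proof -
  have "(\<Sum>i\<le>n. \<Sum>j\<le>n - i. F i j) = (\<Sum>i\<le>n. \<Sum>j | j \<in> {..n} \<and> i + j \<le> n. F i j)"
    by (intro sum.cong) auto
  also have "\<dots> = (\<Sum>j\<le>n. \<Sum>i | i \<in> {..n} \<and> i + j \<le> n. F i j)"
    by (rule sum.swap_restrict) auto
  also have "\<dots> = (\<Sum>j\<le>n. \<Sum>i\<le>n - j. F i j)"
    by (intro sum.cong) auto
  finally show ?thesis .
qed

text \<open>Two ways of enumerating \<open>{(i, j, l). i + j + l \<le> n}\<close>: by \<open>i + l\<close> and by \<open>i + j\<close>.\<close>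

lemma sum_simplex_reindex:
  fixes F :: "nat \<Rightarrow> nat \<Rightarrow> nat \<Rightarrow> 'a::comm_monoid_add"
  shows "(\<Sum>k\<le>n. \<Sum>i\<le>k. \<Sum>j\<le>n - k. F i j (k - i)) =
    (\<Sum>k\<le>n. \<Sum>i\<le>k. \<Sum>l\<le>n - k. F i (k - i) l)"
proof -
  have "(\<Sum>k\<le>n. \<Sum>i\<le>k. \<Sum>j\<le>n - k. F i j (k - i)) =
      (\<Sum>k\<le>n. \<Sum>i\<le>k. \<Sum>j\<le>n - (i + (k - i)). F i j (k - i))"
    by (intro sum.cong) auto
  also have "\<dots> = (\<Sum>i\<le>n. \<Sum>l\<le>n - i. \<Sum>j\<le>(n - i) - l. F i j l)"
    using sum_triangle_reindex[of "\<lambda>i l. \<Sum>j\<le>n - (i + l). F i j l" n]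
    by (simp only: diff_diff_left)
  also have "\<dots> = (\<Sum>i\<le>n. \<Sum>j\<le>n - i. \<Sum>l\<le>(n - i) - j. F i j l)"
    by (intro sum.cong refl sum_triangle_swap)
  also have "\<dots> = (\<Sum>k\<le>n. \<Sum>i\<le>k. \<Sum>l\<le>n - (i + (k - i)). F i (k - i) l)"
    using sum_triangle_reindex[of "\<lambda>i j. \<Sum>l\<le>n - (i + j). F i j l" n]
    by (simp only: diff_diff_left)
  also have "\<dots> = (\<Sum>k\<le>n. \<Sum>i\<le>k. \<Sum>l\<le>n - k. F i (k - i) l)"
    by (intro sum.cong) auto
  finally show ?thesis .
qed

text \<open>\<open>hcomp_eval f n x y\<close> is the homogeneous part of degree \<open>n\<close> of \<open>f\<close> evaluated at
  \<open>(x, y)\<close>; with \<open>(x, y) = (cos t, sin t)\<close> it is the coefficient of \<open>\<rho>\<^sup>n\<close> in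
  \<open>f(\<rho> cos t, \<rho> sin t)\<close>.\<close>

definition hcomp_eval :: "'a::comm_ring_1 fps fps \<Rightarrow> nat \<Rightarrow> 'a \<Rightarrow> 'a \<Rightarrow> 'a" where
  "hcomp_eval f n x y = (\<Sum>a\<le>n. fps_nth (fps_nth f a) (n - a) * (x ^ a * y ^ (n - a)))"

lemma fps_fps_mult_nth:
  "fps_nth (fps_nth (f * g) i) j =
    (\<Sum>i1\<le>i. \<Sum>j1\<le>j. fps_nth (fps_nth f i1) j1 * fps_nth (fps_nth g (i - i1)) (j - j1))"
  by (simp add: fps_mult_nth fps_sum_nth atLeast0AtMost)

lemma hcomp_eval_mult:
  "hcomp_eval (f * g) n x y = (\<Sum>k\<le>n. hcomp_eval f k x y * hcomp_eval g (n - k) x y)"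
proof -
  define F where "F i j l = fps_nth (fps_nth f i) j * fps_nth (fps_nth g l) (n - (i + j + l)) *
    (x ^ (i + l) * y ^ (n - (i + l)))" for i j l
  have "hcomp_eval (f * g) n x y = (\<Sum>k\<le>n. \<Sum>i\<le>k. \<Sum>j\<le>n - k. F i j (k - i))"
    unfolding hcomp_eval_def fps_fps_mult_nth sum_distrib_right
    by (intro sum.cong) (auto simp: F_def add_ac)
  also have "\<dots> = (\<Sum>k\<le>n. \<Sum>i\<le>k. \<Sum>l\<le>n - k. F i (k - i) l)"
    by (rule sum_simplex_reindex)
  also have "\<dots> = (\<Sum>k\<le>n. hcomp_eval f k x y * hcomp_eval g (n - k) x y)"
    unfolding hcomp_eval_def sum_product
  proof (intro sum.cong refl)
    fix k i l assume "k \<in> {..n}" "i \<in> {..k}" "l \<in> {..n - k}"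
    then have "n - (i + (k - i) + l) = n - k - l" "n - (i + l) = (k - i) + (n - k - l)"
      by auto
    then show "F i (k - i) l = fps_nth (fps_nth f i) (k - i) * (x ^ i * y ^ (k - i)) *
        (fps_nth (fps_nth g l) (n - k - l) * (x ^ l * y ^ (n - k - l)))"
      by (simp add: F_def power_add mult_ac)
  qed
  finally show ?thesis .
qed

lemma higher_deriv_sum:
  fixes g :: "'b \<Rightarrow> complex \<Rightarrow> complex"
  assumes "finite S" "\<And>s. s \<in> S \<Longrightarrow> g s holomorphic_on UNIV"
  shows "(deriv ^^ i) (\<lambda>t. \<Sum>s\<in>S. g s t) z = (\<Sum>s\<in>S. (deriv ^^ i) (g s) z)"
  using assms
proof (induction S rule: finite_induct)
  case (insert s S)
  have "(deriv ^^ i) (\<lambda>t. g s t + (\<Sum>s\<in>S. g s t)) z =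
      (deriv ^^ i) (g s) z + (deriv ^^ i) (\<lambda>t. \<Sum>s\<in>S. g s t) z"
    by (rule higher_deriv_add[where S = UNIV]) (use insert in \<open>auto intro!: holomorphic_intros\<close>)
  then show ?case using insert by simp
qed simp

lemma phi_deriv_add: "phi_deriv (f + g) \<alpha> i = phi_deriv f \<alpha> i + phi_deriv g \<alpha> i"
  by (simp add: phi_deriv_def fps_eq_iff algebra_simps sum.distrib)

lemma phi_deriv_nth:
  "fps_nth (phi_deriv f \<alpha> i) n = (deriv ^^ i) (\<lambda>t. hcomp_eval f n (cos t) (sin t)) \<alpha>"
proof -
  have "(deriv ^^ i) (\<lambda>t. hcomp_eval f n (cos t) (sin t)) \<alpha> =
      (\<Sum>a\<le>n. (deriv ^^ i) (\<lambda>t. fps_nth (fps_nth f a) (n - a) * (cos t ^ a * sin t ^ (n - a))) \<alpha>)"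
    unfolding hcomp_eval_def by (rule higher_deriv_sum) (auto intro!: holomorphic_intros)
  also have "\<dots> = (\<Sum>a\<le>n. fps_nth (fps_nth f a) (n - a) *
      (deriv ^^ i) (\<lambda>t. cos t ^ a * sin t ^ (n - a)) \<alpha>)"
    by (intro sum.cong refl higher_deriv_cmult[where A = UNIV]) (auto intro!: holomorphic_intros)
  finally show ?thesis by (simp add: phi_deriv_def)
qed

lemma phi_deriv_mult:
  "phi_deriv (f * g) \<alpha> i =
    (\<Sum>j\<le>i. of_nat (i choose j) * phi_deriv f \<alpha> j * phi_deriv g \<alpha> (i - j))"
proof (rule fps_ext)
  fix n
  define P Q where "P k = (\<lambda>t. hcomp_eval f k (cos t) (sin t))"
    and "Q k = (\<lambda>t. hcomp_eval g k (cos t) (sin t))" for k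
  have hol: "P k holomorphic_on UNIV" "Q k holomorphic_on UNIV" for k
    unfolding P_def Q_def hcomp_eval_def by (auto intro!: holomorphic_intros)
  have "fps_nth (phi_deriv (f * g) \<alpha> i) n = (deriv ^^ i) (\<lambda>t. \<Sum>k\<le>n. P k t * Q (n - k) t) \<alpha>"
    by (simp add: phi_deriv_nth hcomp_eval_mult P_def Q_def)
  also have "\<dots> = (\<Sum>k\<le>n. (deriv ^^ i) (\<lambda>t. P k t * Q (n - k) t) \<alpha>)"
    by (rule higher_deriv_sum) (auto intro!: holomorphic_intros hol)
  also have "\<dots> = (\<Sum>k\<le>n. \<Sum>j=0..i. of_nat (i choose j) *
      (deriv ^^ j) (P k) \<alpha> * (deriv ^^ (i - j)) (Q (n - k)) \<alpha>)"
    by (intro sum.cong refl higher_deriv_mult[where S = UNIV] hol) auto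
  also have "\<dots> = (\<Sum>j\<le>i. \<Sum>k\<le>n. of_nat (i choose j) *
      fps_nth (phi_deriv f \<alpha> j) k * fps_nth (phi_deriv g \<alpha> (i - j)) (n - k))"
    by (subst sum.swap) (simp add: phi_deriv_nth P_def Q_def atLeast0AtMost)
  also have "\<dots> = fps_nth (\<Sum>j\<le>i. of_nat (i choose j) * phi_deriv f \<alpha> j * phi_deriv g \<alpha> (i - j)) n"
    unfolding fps_sum_nth fps_of_nat[symmetric]
    by (intro sum.cong refl, subst fps_mult_nth) (simp add: atLeast0AtMost mult.assoc)
  finally show "fps_nth (phi_deriv (f * g) \<alpha> i) n =
      fps_nth (\<Sum>j\<le>i. of_nat (i choose j) * phi_deriv f \<alpha> j * phi_deriv g \<alpha> (i - j)) n" .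
qed

lemma binomial_div_fact:
  assumes "j \<le> i"
  shows "1 / fact i * of_nat (i choose j) = 1 / fact j * (1 / fact (i - j) :: 'a::field_char_0)"
  using binomial_fact[OF assms, where 'a = 'a] by simp

lemma coeff_taylor_T:
  "coeff (taylor_T \<alpha> k f) i = (if i < k then fps_const (1 / fact i) * phi_deriv f \<alpha> i else 0)"
  unfolding taylor_T_def coeff_sum by auto

lemma ptrunc_taylor_T: "ptrunc k (taylor_T \<alpha> k f) = taylor_T \<alpha> k f"
  unfolding ptrunc_eq_self_iff coeff_taylor_T by auto

lemma taylor_T_mult:
  "eq_below k (taylor_T \<alpha> k (f * g)) (taylor_T \<alpha> k f * taylor_T \<alpha> k g)"
  unfolding eq_below_def
proof (intro allI impI)
  fix i assume "i < k"
  have "coeff (taylor_T \<alpha> k (f * g)) i = (\<Sum>j\<le>i.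
      (fps_const (1 / fact i) * of_nat (i choose j)) * phi_deriv f \<alpha> j * phi_deriv g \<alpha> (i - j))"
    using \<open>i < k\<close> by (simp add: coeff_taylor_T phi_deriv_mult sum_distrib_left mult.assoc)
  also have "\<dots> = (\<Sum>j\<le>i. (fps_const (1 / fact j) * phi_deriv f \<alpha> j) *
      (fps_const (1 / fact (i - j)) * phi_deriv g \<alpha> (i - j)))"
  proof (intro sum.cong refl)
    fix j assume "j \<in> {..i}"
    then have "fps_const (1 / fact i) * of_nat (i choose j) =
        fps_const (1 / fact j) * (fps_const (1 / fact (i - j)) :: complex fps)"
      by (simp only: fps_of_nat[symmetric] fps_const_mult binomial_div_fact atMost_iff)
    then show "fps_const (1 / fact i) * of_nat (i choose j) * phi_deriv f \<alpha> j *
          phi_deriv g \<alpha> (i - j) =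
        fps_const (1 / fact j) * phi_deriv f \<alpha> j *
          (fps_const (1 / fact (i - j)) * phi_deriv g \<alpha> (i - j))"
      by (simp only: mult_ac)
  qed
  also have "\<dots> = coeff (taylor_T \<alpha> k f * taylor_T \<alpha> k g) i"
    unfolding coeff_mult using \<open>i < k\<close> by (intro sum.cong refl) (auto simp: coeff_taylor_T)
  finally show "coeff (taylor_T \<alpha> k (f * g)) i = coeff (taylor_T \<alpha> k f * taylor_T \<alpha> k g) i" .
qed

section \<open>The exponential of a power series in \<open>z\<^sub>1, z\<^sub>2\<close>\<close>

definition total_order_ge :: "nat \<Rightarrow> complex fps fps \<Rightarrow> bool" where
  "total_order_ge N f \<longleftrightarrow> (\<forall>i j. i + j < N \<longrightarrow> fps_nth (fps_nth f i) j = 0)"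

definition agree_upto :: "nat \<Rightarrow> complex fps fps \<Rightarrow> complex fps fps \<Rightarrow> bool" where
  "agree_upto N f g \<longleftrightarrow>
    (\<forall>i j. i + j \<le> N \<longrightarrow> fps_nth (fps_nth f i) j = fps_nth (fps_nth g i) j)"

definition cscale :: "complex \<Rightarrow> complex fps fps \<Rightarrow> complex fps fps" where
  "cscale r f = fps_const (fps_const r) * f"

lemma cscale_nth [simp]: "fps_nth (fps_nth (cscale r f) i) j = r * fps_nth (fps_nth f i) j"
  by (simp add: cscale_def)

lemma cscale_cscale: "cscale r (cscale s f) = cscale (r * s) f"
  by (simp add: cscale_def mult.assoc[symmetric] fps_const_mult)

lemma cscale_mult_cscale: "cscale r f * cscale s g = cscale (r * s) (f * g)"
  by (simp add: cscale_def mult_ac flip: fps_const_mult)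

lemma cscale_mult_left: "cscale r f * g = cscale r (f * g)"
  by (simp add: cscale_def mult.assoc)

lemma cscale_sum: "cscale r (\<Sum>x\<in>A. F x) = (\<Sum>x\<in>A. cscale r (F x))"
  by (simp add: cscale_def sum_distrib_left)

lemma of_nat_mult_eq_cscale: "of_nat c * f = cscale (of_nat c) f"
  by (simp add: cscale_def flip: fps_of_nat)

lemma total_order_ge_mult:
  assumes f: "total_order_ge p f" and g: "total_order_ge q g"
  shows "total_order_ge (p + q) (f * g)"
  unfolding total_order_ge_def fps_fps_mult_nth
proof (intro allI impI sum.neutral ballI)
  fix i j i1 j1 assume ij: "i + j < p + q" and "i1 \<in> {..i}" "j1 \<in> {..j}"
  then have "i1 + j1 < p \<or> (i - i1) + (j - j1) < q" by auto
  then show "fps_nth (fps_nth f i1) j1 * fps_nth (fps_nth g (i - i1)) (j - j1) = 0"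
    using f g by (auto simp: total_order_ge_def)
qed

lemma total_order_ge_power: "total_order_ge 1 a \<Longrightarrow> total_order_ge n (a ^ n)"
proof (induction n)
  case (Suc n)
  then show ?case using total_order_ge_mult[of 1 a n "a ^ n"] by simp
qed (simp add: total_order_ge_def)

lemma total_order_ge_sum:
  "(\<And>x. x \<in> A \<Longrightarrow> total_order_ge k (F x)) \<Longrightarrow> total_order_ge k (\<Sum>x\<in>A. F x)"
  by (simp add: total_order_ge_def fps_sum_nth)

lemma total_order_ge_cscale: "total_order_ge k f \<Longrightarrow> total_order_ge k (cscale r f)"
  by (simp add: total_order_ge_def)

lemma total_order_ge_mono: "total_order_ge p f \<Longrightarrow> q \<le> p \<Longrightarrow> total_order_ge q f"
  by (simp add: total_order_ge_def)

lemma agree_upto_iff_total_order_ge: "agree_upto N f g \<longleftrightarrow> total_order_ge (Suc N) (f - g)"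
  by (auto simp: agree_upto_def total_order_ge_def)

lemma agree_upto_sym: "agree_upto N f g \<Longrightarrow> agree_upto N g f"
  by (simp add: agree_upto_def)

lemma agree_upto_trans [trans]: "agree_upto N f g \<Longrightarrow> agree_upto N g h \<Longrightarrow> agree_upto N f h"
  by (simp add: agree_upto_def)

lemma agree_upto_cscale: "agree_upto N f g \<Longrightarrow> agree_upto N (cscale r f) (cscale r g)"
  by (simp add: agree_upto_def)

lemma agree_upto_mult:
  assumes f: "agree_upto N f f'" and g: "agree_upto N g g'"
  shows "agree_upto N (f * g) (f' * g')"
  unfolding agree_upto_def fps_fps_mult_nth
proof (intro allI impI sum.cong refl)
  fix i j i1 j1 assume "i + j \<le> N" "i1 \<in> {..i}" "j1 \<in> {..j}"
  then have "i1 + j1 \<le> N" "(i - i1) + (j - j1) \<le> N" by auto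
  then show "fps_nth (fps_nth f i1) j1 * fps_nth (fps_nth g (i - i1)) (j - j1) =
      fps_nth (fps_nth f' i1) j1 * fps_nth (fps_nth g' (i - i1)) (j - j1)"
    using f g by (simp add: agree_upto_def)
qed

definition exp_partial :: "nat \<Rightarrow> complex fps fps \<Rightarrow> complex fps fps" where
  "exp_partial N a = (\<Sum>n\<le>N. cscale (1 / fact n) (a ^ n))"

text \<open>Up to total degree \<open>N\<close>, \<open>bexp h\<close> is \<open>e\<^sup>c\<close> times the \<open>N\<close>-th partial sum of the
  exponential series of \<open>h - c\<close>, because \<open>(h - c)\<^sup>n\<close> has no terms of degree \<open>< n\<close>.\<close>

lemma bexp_agree_upto:
  fixes h :: "complex fps fps"
  defines "c \<equiv> fps_nth (fps_nth h 0) 0"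
  shows "agree_upto N (bexp h) (cscale (exp c) (exp_partial N (h - fps_const (fps_const c))))"
  unfolding agree_upto_def
proof (intro allI impI)
  fix i j assume ij: "i + j \<le> N"
  define a where "a = h - fps_const (fps_const c)"
  have a: "total_order_ge 1 a" by (simp add: total_order_ge_def a_def c_def)
  have "fps_nth (fps_nth (exp_partial N a) i) j =
      (\<Sum>n\<le>N. fps_nth (fps_nth (a ^ n) i) j / fact n)"
    by (simp add: exp_partial_def fps_sum_nth)
  also have "\<dots> = (\<Sum>n\<le>i + j. fps_nth (fps_nth (a ^ n) i) j / fact n)"
    using ij total_order_ge_power[OF a]
    by (intro sum.mono_neutral_right) (auto simp: total_order_ge_def)
  finally show "fps_nth (fps_nth (bexp h) i) j =
      fps_nth (fps_nth (cscale (exp c) (exp_partial N a)) i) j"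
    by (simp add: bexp_def Let_def flip: c_def a_def)
qed

lemma exp_partial_add:
  assumes a: "total_order_ge 1 a" and b: "total_order_ge 1 b"
  shows "agree_upto N (exp_partial N (a + b)) (exp_partial N a * exp_partial N b)"
proof -
  define T where "T p q = cscale (1 / fact p * (1 / fact q)) (a ^ p * b ^ q)" for p q
  have "cscale (1 / fact n) ((a + b) ^ n) = (\<Sum>k\<le>n. T k (n - k))" for n
  proof -
    have "(a + b) ^ n = (\<Sum>k\<le>n. cscale (of_nat (n choose k)) (a ^ k * b ^ (n - k)))"
      by (simp only: binomial_ring of_nat_mult_eq_cscale cscale_mult_left mult.assoc)
    then have "cscale (1 / fact n) ((a + b) ^ n) =
        (\<Sum>k\<le>n. cscale (1 / fact n * of_nat (n choose k)) (a ^ k * b ^ (n - k)))"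
      by (simp add: cscale_sum cscale_cscale)
    also have "\<dots> = (\<Sum>k\<le>n. T k (n - k))"
      by (intro sum.cong refl) (simp only: binomial_div_fact atMost_iff T_def)
    finally show ?thesis .
  qed
  then have "exp_partial N (a + b) = (\<Sum>n\<le>N. \<Sum>k\<le>n. T k (n - k))"
    by (simp add: exp_partial_def)
  also have "\<dots> = (\<Sum>p\<le>N. \<Sum>q\<le>N - p. T p q)"
    by (rule sum_triangle_reindex)
  finally have "exp_partial N a * exp_partial N b - exp_partial N (a + b) =
      (\<Sum>p\<le>N. (\<Sum>q\<le>N. T p q) - (\<Sum>q\<le>N - p. T p q))"
    by (simp only: exp_partial_def sum_product cscale_mult_cscale T_def sum_subtractf)
  also have "\<dots> = (\<Sum>p\<le>N. \<Sum>q\<in>{..N} - {..N - p}. T p q)"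
    by (intro sum.cong refl sum_diff[symmetric]) auto
  finally have diff: "exp_partial N a * exp_partial N b - exp_partial N (a + b) = \<dots>" .
  have "total_order_ge (Suc N) (\<Sum>p\<le>N. \<Sum>q\<in>{..N} - {..N - p}. T p q)"
  proof (intro total_order_ge_sum)
    fix p q assume "p \<in> {..N}" "q \<in> {..N} - {..N - p}"
    then have "Suc N \<le> p + q" by auto
    moreover have "total_order_ge (p + q) (a ^ p * b ^ q)"
      by (intro total_order_ge_mult total_order_ge_power a b)
    ultimately have "total_order_ge (Suc N) (a ^ p * b ^ q)" by (rule total_order_ge_mono[rotated])
    then show "total_order_ge (Suc N) (T p q)" unfolding T_def by (rule total_order_ge_cscale)
  qed
  then show ?thesis
    unfolding diff[symmetric] agree_upto_iff_total_order_ge[symmetric] by (rule agree_upto_sym)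
qed

lemma bexp_add: "bexp (h1 + h2) = bexp h1 * bexp h2"
proof -
  have agree: "agree_upto N (bexp (h1 + h2)) (bexp h1 * bexp h2)" for N
  proof -
    define c1 c2 where "c1 = fps_nth (fps_nth h1 0) 0" and "c2 = fps_nth (fps_nth h2 0) 0"
    define a1 a2 where "a1 = h1 - fps_const (fps_const c1)" and "a2 = h2 - fps_const (fps_const c2)"
    have a: "total_order_ge 1 a1" "total_order_ge 1 a2"
      by (simp_all add: total_order_ge_def a1_def a2_def c1_def c2_def)
    have c: "fps_nth (fps_nth (h1 + h2) 0) 0 = c1 + c2" by (simp add: c1_def c2_def)
    have h: "h1 + h2 - fps_const (fps_const (c1 + c2)) = a1 + a2"
      by (simp add: a1_def a2_def algebra_simps)
    have "agree_upto N (bexp (h1 + h2)) (cscale (exp (c1 + c2)) (exp_partial N (a1 + a2)))"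
      using bexp_agree_upto[of N "h1 + h2"] unfolding c h .
    also have "agree_upto N \<dots>
        (cscale (exp c1) (exp_partial N a1) * cscale (exp c2) (exp_partial N a2))"
      unfolding cscale_mult_cscale exp_add[symmetric] by (intro agree_upto_cscale exp_partial_add a)
    also have "agree_upto N \<dots> (bexp h1 * bexp h2)"
      unfolding a1_def a2_def c1_def c2_def
      by (intro agree_upto_mult; rule agree_upto_sym, rule bexp_agree_upto)
    finally show ?thesis .
  qed
  have "fps_nth (fps_nth (bexp (h1 + h2)) i) j = fps_nth (fps_nth (bexp h1 * bexp h2) i) j" for i j
    using agree[of "i + j"] by (simp add: agree_upto_def)
  then show ?thesis by (intro fps_ext) simp
qed

section \<open>Multiplicativity of \<open>T\<^sup>^\<close>\<close>

lemma taylor_That_eq: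
  "taylor_That \<alpha> k h =
    ptrunc k (taylor_T \<alpha> k (bexp h) * [:inverse (fps_Exp (phi_deriv h \<alpha> 0)):])"
proof -
  define T E where "T = taylor_T \<alpha> k (bexp h)" and "E = fps_Exp (phi_deriv h \<alpha> 0)"
  have "fps_nth E 0 \<noteq> 0" by (simp add: E_def fps_Exp_nth_0)
  then have inv: "[:E:] * [:inverse E:] = 1" "[:inverse E:] * [:E:] = 1"
    by (simp_all add: inverse_mult_eq_1 inverse_mult_eq_1' one_pCons)
  have T: "ptrunc k T = T" by (simp add: T_def ptrunc_taylor_T)
  show ?thesis
    unfolding taylor_That_def T_def[symmetric] E_def[symmetric]
  proof (rule the_equality)
    show "ptrunc k (ptrunc k (T * [:inverse E:])) = ptrunc k (T * [:inverse E:]) \<and>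
        T = tmult k (ptrunc k (T * [:inverse E:])) [:E:]"
      by (simp only: tmult_def ptrunc_mult_left mult.assoc inv mult_1_right T ptrunc_idem)
  next
    fix x assume x: "ptrunc k x = x \<and> T = tmult k x [:E:]"
    then have "ptrunc k (T * [:inverse E:]) = ptrunc k (x * ([:E:] * [:inverse E:]))"
      by (simp only: tmult_def ptrunc_mult_left mult.assoc)
    then show "x = ptrunc k (T * [:inverse E:])" using x by (simp only: inv mult_1_right)
  qed
qed

lemma taylor_That_add:
  "taylor_That \<alpha> k (h1 + h2) = tmult k (taylor_That \<alpha> k h1) (taylor_That \<alpha> k h2)"
proof -
  define T1 T2 where "T1 = taylor_T \<alpha> k (bexp h1)" and "T2 = taylor_T \<alpha> k (bexp h2)"
  define I1 I2 where "I1 = [:inverse (fps_Exp (phi_deriv h1 \<alpha> 0)):]"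
    and "I2 = [:inverse (fps_Exp (phi_deriv h2 \<alpha> 0)):]"
  have I: "[:inverse (fps_Exp (phi_deriv (h1 + h2) \<alpha> 0)):] = I1 * I2"
    by (simp add: I1_def I2_def phi_deriv_add fps_Exp_add fps_inverse_mult)
  have "taylor_That \<alpha> k (h1 + h2) = ptrunc k (taylor_T \<alpha> k (bexp h1 * bexp h2) * (I1 * I2))"
    by (simp add: taylor_That_eq bexp_add I)
  also have "\<dots> = ptrunc k (T1 * T2 * (I1 * I2))"
    unfolding ptrunc_eq_iff T1_def T2_def by (rule eq_below_mult[OF taylor_T_mult eq_below_refl])
  also have "\<dots> = ptrunc k ((T1 * I1) * (T2 * I2))"
    by (simp only: mult_ac)
  also have "\<dots> = ptrunc k (ptrunc k (T1 * I1) * ptrunc k (T2 * I2))"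
    by (simp only: ptrunc_mult_left ptrunc_mult_right)
  finally show ?thesis
    by (simp only: tmult_def taylor_That_eq T1_def T2_def I1_def I2_def)
qed

lemma taylor_That_unit:
  assumes "0 < k"
  shows "coeff (taylor_That \<alpha> k h) 0 dvd 1"
proof -
  have "coeff (taylor_That \<alpha> k h) 0 =
      phi_deriv (bexp h) \<alpha> 0 * inverse (fps_Exp (phi_deriv h \<alpha> 0))"
    using assms by (simp add: taylor_That_eq coeff_ptrunc coeff_taylor_T)
  moreover have "fps_nth (phi_deriv (bexp h) \<alpha> 0 * inverse (fps_Exp (phi_deriv h \<alpha> 0))) 0 \<noteq> 0"
    by (simp add: phi_deriv_def bexp_def Let_def fps_Exp_nth_0)
  ultimately show ?thesis by (metis dvdI inverse_mult_eq_1')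
qed

theorem lemma3p15:
  fixes \<alpha> :: complex and m :: nat
  shows "Upsilon \<alpha> m \<in> hom Rhat_add_group (circ_group m)"
proof (cases "m = 0")
  case True
  then show ?thesis
    by (simp add: hom_def Rhat_add_group_def circ_group_def Upsilon_def gammaK_0 to_sigma_def
        circ_def tmult_def ptrunc_def)
next
  case False
  then have unit: "coeff (taylor_That \<alpha> (2 * m) h) 0 dvd 1" for h
    by (intro taylor_That_unit) simp
  have "Upsilon \<alpha> m (h1 + h2) = circ m (Upsilon \<alpha> m h1) (Upsilon \<alpha> m h2)" for h1 h2
    using to_sigma_gammaK_tmult[OF unit unit] by (simp add: Upsilon_def taylor_That_add)
  moreover have "ptrunc m (Upsilon \<alpha> m h) = Upsilon \<alpha> m h" for h
    unfolding Upsilon_def by (rule ptrunc_to_sigma_gammaK[OF unit])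
  ultimately show ?thesis by (simp add: hom_def Rhat_add_group_def circ_group_def)
qed

end
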